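(* Let $C$ be a cycle of goods, $N$ a regular set of $n$ agents, $t\ge2$ an integer, and $N_1,\dots,N_t$ pairwise disjoint subsets of $N$ with $\bigcup_{i=1}^t N_i=N$, $|N_1|\ge|N_2|\ge\dots\ge|N_t|$, such that for each $i$ all agents in $N_i$ are of the same type. Let $c_t=\frac{t}{2t-2}$. Suppose $N_1,N_2\neq\emptyset$ and there are $n$-splits $\Pi_1,\Pi_2$ of $C$ such that $\Pi_i$ is $c_t$-strong for the agents in $N_i$ ($i=1,2$), and there is a bundle $A\in\Pi_1$ and a bundle $B\in\Pi_2$ such that $A\cap B$ has value at least $c_t$ to some agent in $N$. Then there exists a $c_t$-strong allocation of the goods of $C$ to the agents in $N$.
   Context: A cycle of goods has goods $v_1,\dots,v_m$ with edges $v_iv_{i+1}$ and $v_mv_1$. A utility function assigns a non-negative real to each good, extended additively to sets. A bundle is a set of goods inducing a connected subgraph (empty allowed); an $n$-split is a sequence of $n$ pairwise disjoint bundles (possibly empty) with union all goods. $\mathrm{mms}^{(n)}(C,u)=\max_{P_1,\dots,P_n}\min_i u(P_i)$ over all $n$-splits. Agents are of the same type if they have the same utility function. An agent with utility $u$ is $n$-regular if $\mathrm{mms}^{(n)}(C,u)=u(\text{all goods})/n=1$; a set of $n$ agents is regular if every agent in it is $n$-regular. A split is $q$-strong for an agent if each of its bundles has value at least $q$ to that agent. An allocation (an $n$-split with the $i$-th bundle assigned to agent $i$) is $q$-strong if every agent receives a bundle of value at least $q$ to her. *)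

theory Defs
  imports Complex_Main
begin

(* Cycle of goods with m goods, represented as 0,...,m-1, edges i -- (i+1) mod m.
  A bundle is a set of goods inducing a connected subgraph (the empty set allowed):
  exactly the empty set and the arcs of the cycle. *)

definition is_bundle :: "nat \<Rightarrow> nat set \<Rightarrow> bool" where
  "is_bundle m B \<longleftrightarrow> B = {} \<or>
     (\<exists>s k. s < m \<and> k \<le> m \<and> B = {(s + j) mod m | j. j < k})"

definition val :: "(nat \<Rightarrow> real) \<Rightarrow> nat set \<Rightarrow> real" where
  "val u S = (\<Sum>g\<in>S. u g)"

definition is_split :: "nat \<Rightarrow> nat \<Rightarrow> (nat \<Rightarrow> nat set) \<Rightarrow> bool" where
  "is_split m n P \<longleftrightarrow> (\<forall>i<n. is_bundle m (P i)) \<and>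
     (\<forall>i<n. \<forall>j<n. i \<noteq> j \<longrightarrow> P i \<inter> P j = {}) \<and>
     (\<Union>i<n. P i) = {..<m}"

definition mms :: "nat \<Rightarrow> nat \<Rightarrow> (nat \<Rightarrow> real) \<Rightarrow> real" where
  "mms m n u = Max {Min ((\<lambda>i. val u (P i)) ` {..<n}) | P. is_split m n P}"

definition n_regular :: "nat \<Rightarrow> nat \<Rightarrow> (nat \<Rightarrow> real) \<Rightarrow> bool" where
  "n_regular m n u \<longleftrightarrow> mms m n u = val u {..<m} / real n \<and> val u {..<m} / real n = 1"

definition strong_for :: "nat \<Rightarrow> real \<Rightarrow> (nat \<Rightarrow> real) \<Rightarrow> (nat \<Rightarrow> nat set) \<Rightarrow> bool" where
  "strong_for n q u P \<longleftrightarrow> (\<forall>i<n. val u (P i) \<ge> q)"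

definition strong_alloc :: "nat \<Rightarrow> nat \<Rightarrow> real \<Rightarrow> (nat \<Rightarrow> nat \<Rightarrow> real) \<Rightarrow> (nat \<Rightarrow> nat set) \<Rightarrow> bool" where
  "strong_alloc m n q U P \<longleftrightarrow> is_split m n P \<and> (\<forall>i<n. val (U i) (P i) \<ge> q)"

end

(*
  Let c = t / (2t - 2).  If some agent values a single good at c or more, she takes it; every
  other agent is regular and so still sees n - 1 disjoint bundles of value at least 1 avoiding it.
  Otherwise every good is light, and inside A \<inter> B we choose a shortest arc D that some agent a0
  values at c; by minimality every agent values D below 2c, and the agents of N1 \<union> N2 still see
  the n - 1 bundles of \<Pi>1 or \<Pi>2 other than A or B.  In both cases a0 takes D and a moving knife
  shares the remaining path among the others, serving first the "bad" agents, who lack such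
  bundles: each of them loses less than 2c per bad agent served and less than c per good one.
  As all agents value the cycle at n and |N1| + |N2| \<ge> 2n / t, what a bad agent keeps is
  enough precisely because c = t / (2t - 2).
*)

theory Submission
  imports Defs "HOL-Library.FuncSet"
begin

section \<open>Greedy cuts of a weighted path\<close>

lemma sum_interval_mono:
  fixes w :: "nat \<Rightarrow> real"
  assumes "\<And>p. 0 \<le> w p" "x' \<le> x" "y \<le> y'"
  shows "sum w {x..<y} \<le> sum w {x'..<y'}"
  by (rule sum_mono2) (use assms in auto)

fun cuttable :: "(nat \<Rightarrow> real) \<Rightarrow> real \<Rightarrow> nat \<Rightarrow> nat \<Rightarrow> nat \<Rightarrow> bool" where
  "cuttable w c 0 lo hi \<longleftrightarrow> lo \<le> hi"
| "cuttable w c (Suc k) lo hi \<longleftrightarrow> (\<exists>x. lo \<le> x \<and> c \<le> sum w {lo..<x} \<and> cuttable w c k x hi)"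

lemma cuttable_le: "cuttable w c k lo hi \<Longrightarrow> lo \<le> hi"
  by (induction k arbitrary: lo) (auto dest: order_trans)

lemma cuttable_imp_sum:
  assumes "cuttable w c (Suc k) lo hi" "\<And>p. 0 \<le> w p"
  shows "c \<le> sum w {lo..<hi}"
proof -
  obtain x where x: "c \<le> sum w {lo..<x}" "cuttable w c k x hi"
    using assms(1) by (metis cuttable.simps(2))
  have "sum w {lo..<x} \<le> sum w {lo..<hi}"
    by (rule sum_interval_mono) (use assms(2) cuttable_le[OF x(2)] in auto)
  with x(1) show ?thesis by linarith
qed

lemma cuttable_Suc_imp: "cuttable w c (Suc k) lo hi \<Longrightarrow> cuttable w c k lo hi"
proof (induction k arbitrary: lo)
  case 0
  then show ?case using cuttable_le by fastforce
next
  case (Suc k)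
  then obtain x where "lo \<le> x" "c \<le> sum w {lo..<x}" "cuttable w c (Suc k) x hi"
    by (metis cuttable.simps(2))
  then show ?case using Suc.IH by (metis cuttable.simps(2))
qed

lemma cuttable_mono: "cuttable w c k lo hi \<Longrightarrow> k' \<le> k \<Longrightarrow> cuttable w c k' lo hi"
proof (induction k)
  case (Suc k)
  then show ?case
    by (cases "k' = Suc k") (simp_all add: cuttable_Suc_imp le_Suc_eq)
qed simp

lemma cuttable_mono_lo:
  assumes "cuttable w c k x' hi" "x \<le> x'" "\<And>p. 0 \<le> w p"
  shows "cuttable w c k x hi"
proof (cases k)
  case (Suc k')
  then obtain y where "x' \<le> y" "c \<le> sum w {x'..<y}" "cuttable w c k' y hi" using assms(1) by auto
  moreover have "sum w {x'..<y} \<le> sum w {x..<y}" using sum_interval_mono assms by blast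
  ultimately show ?thesis
    unfolding Suc cuttable.simps using assms(2) by (intro exI[of _ y] conjI) linarith+
qed (use assms in simp)

lemma cuttable_after_first_cut:
  assumes "cuttable w c (Suc k) lo hi" "\<And>y. y < x \<Longrightarrow> sum w {lo..<y} < c" "\<And>p. 0 \<le> w p"
  shows "cuttable w c k x hi"
proof -
  obtain y where "c \<le> sum w {lo..<y}" "cuttable w c k y hi" using assms(1) by auto
  moreover from calculation(1) have "x \<le> y" using assms(2) by (meson leI not_le)
  ultimately show ?thesis using cuttable_mono_lo assms(3) by blast
qed

lemma cuttable_snoc:
  assumes "cuttable w c k lo l" "l \<le> r" "r \<le> hi" "c \<le> sum w {l..<r}" "\<And>p. 0 \<le> w p"
  shows "cuttable w c (Suc k) lo hi"
  using assms(1)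
proof (induction k arbitrary: lo)
  case 0
  then have "lo \<le> l" by simp
  moreover have "sum w {l..<r} \<le> sum w {lo..<r}"
    by (rule sum_interval_mono) (use assms(5) calculation in auto)
  ultimately show ?case
    unfolding cuttable.simps using assms(2-4) by (intro exI[of _ r] conjI) linarith+
next
  case (Suc k)
  then obtain x where "lo \<le> x" "c \<le> sum w {lo..<x}" "cuttable w c k x l" by auto
  then show ?case using Suc.IH by (meson cuttable.simps(2))
qed

lemma cuttable_of_disjoint_intervals:
  assumes "finite J" "0 < c" "\<And>p. 0 \<le> w p"
    and "\<And>i. i \<in> J \<Longrightarrow> lo \<le> l i \<and> r i \<le> hi \<and> c \<le> sum w {l i..<r i}"
    and "\<And>i j. i \<in> J \<Longrightarrow> j \<in> J \<Longrightarrow> i \<noteq> j \<Longrightarrow> {l i..<r i} \<inter> {l j..<r j} = {}"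
    and "lo \<le> hi"
  shows "cuttable w c (card J) lo hi"
  using assms(1,4-6)
proof (induction "card J" arbitrary: J hi)
  case (Suc k)
  have nonempty: "l i < r i" if "i \<in> J" for i
    using Suc.prems(2)[OF that] assms(2) by (cases "l i < r i") auto
  define L where "L = Max (l ` J)"
  obtain j0 where j0: "j0 \<in> J" "l j0 = L"
    using Max_in[of "l ` J"] Suc.hyps(2) Suc.prems(1) unfolding L_def by fastforce
  have rest: "r i \<le> L" if "i \<in> J - {j0}" for i
  proof (rule ccontr)
    assume "\<not> r i \<le> L"
    then have "L \<in> {l i..<r i} \<inter> {l j0..<r j0}"
      using that j0 nonempty[OF j0(1)] Max_ge[OF finite_imageI[OF Suc.prems(1)], of "l i"]
      unfolding L_def by auto
    then show False using Suc.prems(3)[of i j0] that j0 by auto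
  qed
  have "cuttable w c (card (J - {j0})) lo L"
  proof (rule Suc.hyps(1))
    show "k = card (J - {j0})" using Suc.hyps(2) j0(1) by simp
    show "lo \<le> L" using Suc.prems(2)[OF j0(1)] j0(2) by simp
    show "finite (J - {j0})" using Suc.prems(1) by simp
    show "\<And>i. i \<in> J - {j0} \<Longrightarrow> lo \<le> l i \<and> r i \<le> L \<and> c \<le> sum w {l i..<r i}"
      using Suc.prems(2) rest by blast
    show "\<And>i j. i \<in> J - {j0} \<Longrightarrow> j \<in> J - {j0} \<Longrightarrow> i \<noteq> j \<Longrightarrow> {l i..<r i} \<inter> {l j..<r j} = {}"
      using Suc.prems(3) by blast
  qed
  then have "cuttable w c (Suc (card (J - {j0}))) lo hi"
    using Suc.prems(2)[OF j0(1)] j0(2) nonempty[OF j0(1)] assms(3)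
    by (intro cuttable_snoc[of w c _ lo L "r j0" hi]) simp_all
  then show ?case using j0(1) Suc.prems(1) Suc.hyps(2) by (simp add: card_Suc_Diff1)
qed simp

section \<open>The moving knife on a path\<close>

definition interval_alloc ::
  "nat set \<Rightarrow> real \<Rightarrow> (nat \<Rightarrow> nat \<Rightarrow> real) \<Rightarrow> nat \<Rightarrow> nat \<Rightarrow> (nat \<Rightarrow> nat set) \<Rightarrow> bool" where
  "interval_alloc M c w lo hi I \<longleftrightarrow>
     (\<forall>a\<in>M. (\<exists>l r. I a = {l..<r}) \<and> c \<le> sum (w a) (I a)) \<and>
     (\<forall>a\<in>M. \<forall>b\<in>M. a \<noteq> b \<longrightarrow> I a \<inter> I b = {}) \<and>
     (\<Union>a\<in>M. I a) = {lo..<hi}"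

lemma interval_alloc_singleton:
  "c \<le> sum (w a) {lo..<hi} \<Longrightarrow> interval_alloc {a} c w lo hi (\<lambda>_. {lo..<hi})"
  unfolding interval_alloc_def by auto

lemma interval_alloc_insert:
  assumes "interval_alloc M c w x hi I" "e \<notin> M" "lo \<le> x" "x \<le> hi" "c \<le> sum (w e) {lo..<x}"
  shows "interval_alloc (insert e M) c w lo hi (I(e := {lo..<x}))"
proof -
  have I1: "\<forall>a\<in>M. (\<exists>l r. I a = {l..<r}) \<and> c \<le> sum (w a) (I a)"
    and I2: "\<forall>a\<in>M. \<forall>b\<in>M. a \<noteq> b \<longrightarrow> I a \<inter> I b = {}"
    and I3: "(\<Union>a\<in>M. I a) = {x..<hi}"
    using assms(1) by (simp_all add: interval_alloc_def)
  have disj: "I a \<inter> {lo..<x} = {}" if "a \<in> M" for a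
  proof -
    have "I a \<subseteq> {x..<hi}" using UN_upper[OF that, of I] I3 by simp
    then show ?thesis by auto
  qed
  let ?J = "I(e := {lo..<x})"
  have "(\<Union>a\<in>insert e M. ?J a) = {lo..<x} \<union> {x..<hi}"
    using assms(2) I3 by auto
  also have "\<dots> = {lo..<hi}"
    using assms(3,4) by auto
  moreover have "\<forall>a\<in>insert e M. (\<exists>l r. ?J a = {l..<r}) \<and> c \<le> sum (w a) (?J a)"
    using I1 assms(2,5) by auto
  moreover have "\<forall>a\<in>insert e M. \<forall>b\<in>insert e M. a \<noteq> b \<longrightarrow> ?J a \<inter> ?J b = {}"
    using I2 disj assms(2) by (auto simp: Int_commute)
  ultimately show ?thesis
    unfolding interval_alloc_def by (intro conjI) simp_all
qed

text \<open>The knife stops at the first point where some agent values the swept piece at \<open>c\<close>;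
  among the agents ready there, one of \<open>B\<close> is preferred.\<close>

lemma first_cut:
  fixes w :: "nat \<Rightarrow> nat \<Rightarrow> real"
  assumes "a0 \<in> M" "c \<le> sum (w a0) {lo..<hi}" "0 < c"
  obtains x e where "lo < x" "x \<le> hi" "e \<in> M" "c \<le> sum (w e) {lo..<x}"
    "\<And>a y. a \<in> M \<Longrightarrow> y < x \<Longrightarrow> sum (w a) {lo..<y} < c"
    "e \<notin> B \<Longrightarrow> \<forall>b\<in>B \<inter> M. sum (w b) {lo..<x} < c"
proof -
  define x where "x = (LEAST y. \<exists>a\<in>M. c \<le> sum (w a) {lo..<y})"
  have reach: "\<exists>a\<in>M. c \<le> sum (w a) {lo..<x}"
    unfolding x_def by (rule LeastI[of _ hi]) (use assms in blast)
  have below: "sum (w a) {lo..<y} < c" if "a \<in> M" "y < x" for a y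
    using not_less_Least[of y "\<lambda>y. \<exists>a\<in>M. c \<le> sum (w a) {lo..<y}"] that
    unfolding x_def by (meson not_le)
  have "x \<le> hi"
    unfolding x_def by (rule Least_le) (use assms in blast)
  moreover have "lo < x"
    using reach assms(3) by (cases "lo < x") auto
  moreover obtain e where "e \<in> M" "c \<le> sum (w e) {lo..<x}"
    "e \<notin> B \<Longrightarrow> \<forall>b\<in>B \<inter> M. sum (w b) {lo..<x} < c"
  proof (cases "\<exists>b\<in>B \<inter> M. c \<le> sum (w b) {lo..<x}")
    case False
    then show ?thesis using that reach by (auto simp: not_le)
  qed (use that in blast)
  ultimately show thesis using that below by blast
qed

lemma knife_budget_remove:
  assumes "finite G" "finite B" "G \<inter> B = {}" "e \<in> G \<union> B"
  shows "c * (2 * real (card (B - {e})) + real (card (G - {e})) - 1)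
    = c * (2 * real (card B) + real (card G) - 1) - (if e \<in> B then 2 * c else c)"
proof (cases "e \<in> B")
  case True
  then have "e \<notin> G" "real (card (B - {e})) = real (card B) - 1"
    using assms(2,3) card_gt_0_iff[of B] by (auto simp: of_nat_diff)
  then show ?thesis using True by (simp add: algebra_simps)
next
  case False
  then have "e \<in> G" "real (card (G - {e})) = real (card G) - 1"
    using assms(1,4) card_gt_0_iff[of G] by (auto simp: of_nat_diff)
  then show ?thesis using False by (simp add: algebra_simps)
qed

definition knife_invariant ::
  "nat set \<Rightarrow> nat set \<Rightarrow> nat set \<Rightarrow> real \<Rightarrow> (nat \<Rightarrow> nat \<Rightarrow> real) \<Rightarrow> nat \<Rightarrow> nat \<Rightarrow> bool" where
  "knife_invariant M G B c w lo hi \<longleftrightarrow> finite M \<and> M = G \<union> B \<and> G \<inter> B = {} \<and>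
     (\<forall>a\<in>M. \<forall>p. 0 \<le> w a p) \<and> (\<forall>g\<in>G. cuttable (w g) c (card M) lo hi) \<and>
     (\<forall>b\<in>B. (\<forall>p. w b p < c) \<and> c * (2 * real (card B) + real (card G) - 1) \<le> sum (w b) {lo..<hi})"

lemma knife_invariantD:
  assumes "knife_invariant M G B c w lo hi"
  shows "finite M" "M = G \<union> B" "G \<inter> B = {}"
    and "\<And>a p. a \<in> M \<Longrightarrow> 0 \<le> w a p" "\<And>g. g \<in> G \<Longrightarrow> cuttable (w g) c (card M) lo hi"
    and "\<And>b p. b \<in> B \<Longrightarrow> w b p < c"
    and "\<And>b. b \<in> B \<Longrightarrow> c * (2 * real (card B) + real (card G) - 1) \<le> sum (w b) {lo..<hi}"
  using assms unfolding knife_invariant_def by blast+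

lemma knife_whole_path:
  assumes inv: "knife_invariant M G B c w lo hi" and "0 < c" "a \<in> M"
  shows "c \<le> sum (w a) {lo..<hi}"
proof (cases "a \<in> B")
  case True
  have "finite B" using knife_invariantD(1,2)[OF inv] by simp
  then have "0 < card B" using True by (auto simp: card_gt_0_iff)
  then have "c * 1 \<le> c * (2 * real (card B) + real (card G) - 1)"
    using assms(2) by (intro mult_left_mono) auto
  then show ?thesis using knife_invariantD(7)[OF inv True] by linarith
next
  case False
  then have "a \<in> G" using knife_invariantD(2)[OF inv] assms(3) by auto
  moreover have "0 < card M" using knife_invariantD(1)[OF inv] assms(3) by (auto simp: card_gt_0_iff)
  then have "card M = Suc (card M - 1)" by simp
  ultimately show ?thesis
    using knife_invariantD(4,5)[OF inv] assms(3) cuttable_imp_sum[of "w a" c "card M - 1"] by simp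
qed

lemma sum_before_first_cut:
  fixes w :: "nat \<Rightarrow> real"
  assumes "lo < x" "\<forall>p. w p < c" "\<And>y. y < x \<Longrightarrow> sum w {lo..<y} < c"
  shows "sum w {lo..<x} < 2 * c"
proof -
  have "sum w {lo..<x} = sum w {lo..<x - 1} + w (x - 1)"
    using assms(1) sum.atLeastLessThan_Suc[of lo "x - 1" w] by simp
  moreover have "sum w {lo..<x - 1} < c" "w (x - 1) < c" using assms by auto
  ultimately show ?thesis by simp
qed

text \<open>A bad agent loses less than \<open>2 c\<close> when another bad agent is served (less than \<open>c\<close> before the
  last good, which itself is worth less than \<open>c\<close>) and less than \<open>c\<close> when a good agent is served;
  this is exactly what its budget drops by.  A good agent loses at most its first cut.\<close>

lemma knife_step:
  assumes inv: "knife_invariant M G B c w lo hi" and "0 < c" "2 \<le> card M"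
  shows "\<exists>x e. lo < x \<and> x \<le> hi \<and> e \<in> M \<and> c \<le> sum (w e) {lo..<x} \<and>
    knife_invariant (M - {e}) (G - {e}) (B - {e}) c w x hi"
proof -
  note fin = knife_invariantD(1)[OF inv] and MGB = knife_invariantD(2,3)[OF inv]
    and nonneg = knife_invariantD(4)[OF inv] and good = knife_invariantD(5)[OF inv]
    and small = knife_invariantD(6)[OF inv] and bad = knife_invariantD(7)[OF inv]
  have finGB: "finite G" "finite B" using fin unfolding MGB(1) by simp_all
  obtain a0 where a0: "a0 \<in> M" using assms(3) by fastforce
  obtain x e where x: "lo < x" "x \<le> hi" and e: "e \<in> M" "c \<le> sum (w e) {lo..<x}"
    and below: "\<And>a y. a \<in> M \<Longrightarrow> y < x \<Longrightarrow> sum (w a) {lo..<y} < c"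
    and e_bad: "e \<notin> B \<Longrightarrow> \<forall>b\<in>B \<inter> M. sum (w b) {lo..<x} < c"
    using first_cut[where w = w and B = B, OF a0 knife_whole_path[OF inv assms(2) a0] assms(2)] by blast
  have card: "card M = Suc (card (M - {e}))" using card_Suc_Diff1[OF fin e(1)] by simp
  have budget: "c * (2 * real (card (B - {e})) + real (card (G - {e})) - 1)
      = c * (2 * real (card B) + real (card G) - 1) - (if e \<in> B then 2 * c else c)"
    by (rule knife_budget_remove[OF finGB MGB(2)]) (use e(1) MGB(1) in blast)
  have "cuttable (w g) c (card (M - {e})) x hi" if "g \<in> G - {e}" for g
  proof (rule cuttable_after_first_cut)
    have g: "g \<in> G" "g \<in> M" using that MGB(1) by auto
    show "cuttable (w g) c (Suc (card (M - {e}))) lo hi" using good[OF g(1)] unfolding card .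
    show "\<And>y. y < x \<Longrightarrow> sum (w g) {lo..<y} < c" using below[OF g(2)] .
    show "\<And>p. 0 \<le> w g p" using nonneg[OF g(2)] .
  qed
  moreover have "(\<forall>p. w b p < c) \<and>
      c * (2 * real (card (B - {e})) + real (card (G - {e})) - 1) \<le> sum (w b) {x..<hi}"
    if "b \<in> B - {e}" for b
  proof -
    have b: "b \<in> B" "b \<in> M" using that MGB(1) by auto
    have "sum (w b) {lo..<x} < (if e \<in> B then 2 * c else c)"
      using sum_before_first_cut[OF x(1) _ below[OF b(2)]] small[OF b(1)] e_bad b by auto
    moreover have "sum (w b) {lo..<x} + sum (w b) {x..<hi} = sum (w b) {lo..<hi}"
      using x by (intro sum.atLeastLessThan_concat) auto
    ultimately have "c * (2 * real (card (B - {e})) + real (card (G - {e})) - 1) \<le> sum (w b) {x..<hi}"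
      using bad[OF b(1)] budget by linarith
    with small[OF b(1)] show ?thesis by blast
  qed
  ultimately have "knife_invariant (M - {e}) (G - {e}) (B - {e}) c w x hi"
    unfolding knife_invariant_def using fin MGB nonneg by auto
  then show ?thesis using x e by blast
qed

lemma moving_knife:
  assumes "knife_invariant M G B c w lo hi" "M \<noteq> {}" "0 < c"
  shows "\<exists>I. interval_alloc M c w lo hi I"
  using assms
proof (induction "card M" arbitrary: M G B lo rule: less_induct)
  case less
  have "finite M" by (rule knife_invariantD(1)[OF less.prems(1)])
  show ?case
  proof (cases "card M = 1")
    case True
    then obtain a where "M = {a}" by (rule card_1_singletonE)
    then have "interval_alloc M c w lo hi (\<lambda>_. {lo..<hi})"
      using interval_alloc_singleton knife_whole_path[OF less.prems(1,3), of a] by simp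
    then show ?thesis by blast
  next
    case False
    then have "2 \<le> card M" using less.prems(2) \<open>finite M\<close> card_gt_0_iff[of M] by linarith
    then obtain x e where x: "lo < x" "x \<le> hi" and e: "e \<in> M" "c \<le> sum (w e) {lo..<x}"
      and inv: "knife_invariant (M - {e}) (G - {e}) (B - {e}) c w x hi"
      using knife_step[OF less.prems(1,3)] by blast
    have smaller: "card (M - {e}) < card M" using card_Diff1_less[OF \<open>finite M\<close> e(1)] .
    have "M - {e} \<noteq> {}"
    proof
      assume "M - {e} = {}"
      then have "card M \<le> card {e}" by (intro card_mono) auto
      with \<open>2 \<le> card M\<close> show False by simp
    qed
    from less.hyps[OF smaller inv this less.prems(3)]
    obtain I where "interval_alloc (M - {e}) c w x hi I" ..
    from interval_alloc_insert[OF this _ less_imp_le[OF x(1)] x(2) e(2)]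
    have "interval_alloc M c w lo hi (I(e := {lo..<x}))" using insert_Diff[OF e(1)] by simp
    then show ?thesis by blast
  qed
qed

section \<open>Cutting the cycle open\<close>

(* rot m s p is the good p steps after s: positions 0, ..., m - 1 read the cycle as a path from s *)
definition rot :: "nat \<Rightarrow> nat \<Rightarrow> nat \<Rightarrow> nat" where
  "rot m s p = (s + p) mod m"

lemma rot_lt: "0 < m \<Longrightarrow> rot m s p < m"
  unfolding rot_def by simp

lemma rot_add: "rot m ((s + d) mod m) p = rot m s (d + p)"
  unfolding rot_def by (simp add: mod_add_left_eq add.assoc)

lemma rot_add_period: "rot m s (p + m) = rot m s p"
  unfolding rot_def by (simp add: add.assoc[symmetric])

lemma inj_on_rot: "inj_on (rot m s) {..<m}"
proof (rule linorder_inj_onI')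
  fix p q assume "p \<in> {..<m}" "q \<in> {..<m}" "p < q"
  then have "\<not> m dvd (s + q) - (s + p)" by (simp add: nat_dvd_not_less)
  then show "rot m s p \<noteq> rot m s q"
    unfolding rot_def using \<open>p < q\<close> mod_eq_dvd_iff_nat[of "s + p" "s + q" m] mod_eq_dvd_iff_nat[of "s + q" "s + p" m] by auto
qed

lemma rot_image_lessThan: "0 < m \<Longrightarrow> rot m s ` {..<m} = {..<m}"
  using rot_lt card_image[OF inj_on_rot]
  by (intro card_subset_eq) (auto simp: image_subset_iff)

lemma rot_image_Int:
  "A \<subseteq> {..<m} \<Longrightarrow> B \<subseteq> {..<m} \<Longrightarrow> rot m s ` A \<inter> rot m s ` B = rot m s ` (A \<inter> B)"
  using inj_on_image_Int[OF inj_on_rot] by simp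

lemma val_rot_image:
  "A \<subseteq> {..<m} \<Longrightarrow> val u (rot m s ` A) = sum (\<lambda>p. u (rot m s p)) A"
  unfolding val_def by (simp add: sum.reindex inj_on_subset[OF inj_on_rot])

lemma val_rot_interval:
  "r \<le> m \<Longrightarrow> val u (rot m s ` {l..<r}) = (\<Sum>p = l..<r. u (rot m s p))"
  by (rule val_rot_image) auto

lemma val_rot_split:
  assumes "0 < m" "len \<le> m"
  shows "val u (rot m s ` {0..<len}) + val u (rot m s ` {len..<m}) = val u {..<m}"
proof -
  have "val u (rot m s ` {0..<len}) + val u (rot m s ` {len..<m}) = val u (rot m s ` {0..<m})"
    using val_rot_interval[of len m u s 0] val_rot_interval[of m m u s] assms(2)
      sum.atLeastLessThan_concat[of 0 len m] by simp
  then show ?thesis using rot_image_lessThan[OF assms(1)] by (simp add: atLeast0LessThan)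
qed

lemma rot_image_interval: "{(s + j) mod m | j. j < k} = rot m s ` {0..<k}"
  unfolding rot_def by auto

lemma is_bundle_rot_image:
  assumes "0 < m" "r \<le> m"
  shows "is_bundle m (rot m s ` {l..<r})"
proof (cases "l < r")
  case True
  have "(+) l ` {0..<r - l} = {l..<r}" using True by (simp add: image_add_atLeastLessThan)
  then have "rot m s ` {l..<r} = rot m ((s + l) mod m) ` {0..<r - l}"
    unfolding rot_add by (metis image_image)
  then have "rot m s ` {l..<r} = {((s + l) mod m + j) mod m | j. j < r - l}"
    unfolding rot_image_interval .
  moreover have "(s + l) mod m < m" "r - l \<le> m" using assms by auto
  ultimately show ?thesis unfolding is_bundle_def by blast
qed (simp add: is_bundle_def)

lemma rot_interval_to_end:
  assumes "k \<le> m"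
  shows "rot m ((s + (y + k)) mod m) ` {m - k..<m} = rot m s ` {y..<y + k}"
proof -
  have "rot m ((s + (y + k)) mod m) p = rot m s (y + (p - (m - k)))" if "p \<in> {m - k..<m}" for p
  proof -
    have "rot m ((s + (y + k)) mod m) p = rot m s ((y + k) + p)" by (rule rot_add)
    also have "(y + k) + p = y + (p - (m - k)) + m" using that assms by auto
    finally show ?thesis by (simp only: rot_add_period)
  qed
  then have "rot m ((s + (y + k)) mod m) ` {m - k..<m}
      = rot m s ` ((\<lambda>p. y + (p - (m - k))) ` {m - k..<m})"
    unfolding image_image by (rule image_cong[OF refl])
  also have "(\<lambda>p. y + (p - (m - k))) ` {m - k..<m} = (+) y ` ((\<lambda>p. p - (m - k)) ` {m - k..<m})"
    by (simp add: image_image)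
  also have "(\<lambda>p. p - (m - k)) ` {m - k..<m} = {0..<k}"
    using assms image_minus_const_atLeastLessThan_nat[of "m - k" "m - k" m] by simp
  finally show ?thesis by (simp add: image_add_atLeastLessThan add.commute)
qed

lemma bundle_off_tail_eq_interval:
  assumes m: "0 < m" and s: "s < m" and len: "len < m"
    and Y: "is_bundle m Y" "Y \<noteq> {}" "Y \<inter> rot m s ` {len..<m} = {}"
  obtains l r where "r \<le> len" "Y = rot m s ` {l..<r}"
proof -
  obtain s' k where sk: "s' < m" "k \<le> m" "Y = rot m s' ` {0..<k}"
    using Y(1,2) unfolding is_bundle_def rot_image_interval by auto
  have "0 < k" using Y(2) sk(3) by (cases k) auto
  define d where "d = (s' + m - s) mod m"
  have d: "d < m" unfolding d_def using m by simp
  have shift: "rot m s (d + q) = rot m s' q" for q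
  proof -
    have "(s + d) mod m = s' mod m"
      unfolding d_def using s by (simp add: mod_add_right_eq)
    then have "((s + d) mod m + q) mod m = (s' mod m + q) mod m" by simp
    then show ?thesis unfolding rot_def by (simp add: mod_add_left_eq add.assoc)
  qed
  have "d < len"
  proof (rule ccontr)
    assume "\<not> d < len"
    then have "rot m s' 0 \<in> rot m s ` {len..<m}"
      using d shift[of 0] by (metis add_0_right atLeastLessThan_iff image_eqI not_less)
    moreover have "rot m s' 0 \<in> Y" using sk(3) \<open>0 < k\<close> by simp
    ultimately show False using Y(3) by auto
  qed
  have "d + k \<le> len"
  proof (rule ccontr)
    assume "\<not> d + k \<le> len"
    then have "rot m s' (len - d) \<in> Y" using sk(3) \<open>d < len\<close> by auto
    moreover have "rot m s' (len - d) \<in> rot m s ` {len..<m}"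
      using shift[of "len - d"] \<open>d < len\<close> len by (intro image_eqI[where x = len]) auto
    ultimately show False using Y(3) by auto
  qed
  have "Y = (\<lambda>q. rot m s (d + q)) ` {0..<k}"
    unfolding sk(3) shift ..
  also have "\<dots> = rot m s ` ((+) d ` {0..<k})" by (simp only: image_image)
  also have "(+) d ` {0..<k} = {d..<d + k}" by (simp add: add.commute)
  finally have "Y = rot m s ` {d..<d + k}" .
  then show thesis using that \<open>d + k \<le> len\<close> by blast
qed

section \<open>Allocating around a reserved arc\<close>

definition outside_bundles :: "nat \<Rightarrow> nat \<Rightarrow> real \<Rightarrow> (nat \<Rightarrow> real) \<Rightarrow> nat set \<Rightarrow> bool" where
  "outside_bundles m k c u D \<longleftrightarrow> (\<exists>(Q :: nat \<Rightarrow> nat set) J. finite J \<and> k \<le> card J \<and>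
     (\<forall>i\<in>J. is_bundle m (Q i) \<and> Q i \<inter> D = {} \<and> c \<le> val u (Q i)) \<and>
     (\<forall>i\<in>J. \<forall>j\<in>J. i \<noteq> j \<longrightarrow> Q i \<inter> Q j = {}))"

lemma outside_bundles_of_split:
  assumes "is_split m n P" "i0 < n" "D \<subseteq> P i0" "\<And>i. i < n \<Longrightarrow> c \<le> val u (P i)"
  shows "outside_bundles m (n - 1) c u D"
  unfolding outside_bundles_def
proof (intro exI conjI)
  show "finite ({..<n} - {i0})" "n - 1 \<le> card ({..<n} - {i0})" using assms(2) by auto
  have P: "\<And>i. i < n \<Longrightarrow> is_bundle m (P i)" "\<And>i j. i < n \<Longrightarrow> j < n \<Longrightarrow> i \<noteq> j \<Longrightarrow> P i \<inter> P j = {}"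
    using assms(1) unfolding is_split_def by simp_all
  show "\<forall>i\<in>{..<n} - {i0}. is_bundle m (P i) \<and> P i \<inter> D = {} \<and> c \<le> val u (P i)"
  proof
    fix i assume i: "i \<in> {..<n} - {i0}"
    then have "P i \<inter> P i0 = {}" using P(2) assms(2) by simp
    then show "is_bundle m (P i) \<and> P i \<inter> D = {} \<and> c \<le> val u (P i)"
      using P(1) assms(3,4) i by auto
  qed
  show "\<forall>i\<in>{..<n} - {i0}. \<forall>j\<in>{..<n} - {i0}. i \<noteq> j \<longrightarrow> P i \<inter> P j = {}"
    using P(2) by simp
qed

lemma cuttable_of_outside_bundles:
  assumes m: "0 < m" "s < m" "len < m" and "0 < c" and nonneg: "\<And>g. g < m \<Longrightarrow> 0 \<le> u g"
    and "outside_bundles m k c u (rot m s ` {len..<m})"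
  shows "cuttable (\<lambda>p. u (rot m s p)) c k 0 len"
proof -
  obtain Q and J :: "nat set" where J: "finite J" "k \<le> card J"
    and Qs: "\<forall>i\<in>J. is_bundle m (Q i) \<and> Q i \<inter> rot m s ` {len..<m} = {} \<and> c \<le> val u (Q i)"
    and disjs: "\<forall>i\<in>J. \<forall>j\<in>J. i \<noteq> j \<longrightarrow> Q i \<inter> Q j = {}"
    using assms(6) unfolding outside_bundles_def by blast
  note Q = bspec[OF Qs] and disj = disjs[rule_format]
  have "\<exists>l r. r \<le> len \<and> Q i = rot m s ` {l..<r}" if "i \<in> J" for i
  proof -
    have "Q i \<noteq> {}" using Q[OF that] \<open>0 < c\<close> by (auto simp: val_def)
    then show ?thesis using bundle_off_tail_eq_interval[OF m] Q[OF that] by metis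
  qed
  then obtain l r where lr: "\<And>i. i \<in> J \<Longrightarrow> r i \<le> len \<and> Q i = rot m s ` {l i..<r i}"
    by metis
  have "cuttable (\<lambda>p. u (rot m s p)) c (card J) 0 len"
  proof (rule cuttable_of_disjoint_intervals[OF J(1) \<open>0 < c\<close>])
    show "\<And>p. 0 \<le> u (rot m s p)" using nonneg rot_lt[OF m(1)] by blast
    show "0 \<le> l i \<and> r i \<le> len \<and> c \<le> (\<Sum>p = l i..<r i. u (rot m s p))" if "i \<in> J" for i
      using Q[OF that] lr[OF that] val_rot_interval[of "r i" m u s "l i"] m(3) by auto
    show "{l i..<r i} \<inter> {l j..<r j} = {}" if "i \<in> J" "j \<in> J" "i \<noteq> j" for i j
    proof -
      have "rot m s ` ({l i..<r i} \<inter> {l j..<r j}) = {}"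
        using disj[OF that] lr[OF that(1)] lr[OF that(2)] m(3)
        by (subst rot_image_Int[symmetric]) auto
      then show ?thesis by simp
    qed
  qed simp
  then show ?thesis using cuttable_mono J(2) by blast
qed

lemma strong_alloc_of_interval_alloc:
  assumes m: "0 < m" "len \<le> m" and a0: "a0 < n" "c \<le> val (U a0) (rot m s ` {len..<m})"
    and I: "interval_alloc ({..<n} - {a0}) c (\<lambda>a p. U a (rot m s p)) 0 len I"
  shows "strong_alloc m n c U (\<lambda>a. rot m s ` (if a = a0 then {len..<m} else I a))"
proof -
  define T where "T a = (if a = a0 then {len..<m} else I a)" for a
  have I_alloc: "\<forall>a\<in>{..<n} - {a0}. (\<exists>l r. I a = {l..<r}) \<and> c \<le> sum (\<lambda>p. U a (rot m s p)) (I a)"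
    "\<forall>a\<in>{..<n} - {a0}. \<forall>b\<in>{..<n} - {a0}. a \<noteq> b \<longrightarrow> I a \<inter> I b = {}"
    "(\<Union>a\<in>{..<n} - {a0}. I a) = {0..<len}"
    using I by (simp_all add: interval_alloc_def)
  have I_sub: "I a \<subseteq> {0..<len}" if "a < n" "a \<noteq> a0" for a
    using UN_upper[of a "{..<n} - {a0}" I] I_alloc(3) that by simp
  have T_sub: "T a \<subseteq> {..<m}" if "a < n" for a
  proof (cases "a = a0")
    case False
    then show ?thesis using I_sub[OF that False] m(2) unfolding T_def by auto
  qed (auto simp: T_def)
  have "is_bundle m (rot m s ` T a)" if an: "a < n" for a
  proof -
    have "\<exists>l r. T a = {l..<r}"
      using I_alloc(1) an unfolding T_def by (cases "a = a0") auto
    then obtain l r where lr: "T a = {l..<r}" by blast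
    show ?thesis
    proof (cases "l < r")
      case True
      then have "r - 1 \<in> T a" using lr by auto
      then have "r \<le> m" using T_sub[OF an] by auto
      then show ?thesis using lr is_bundle_rot_image[OF m(1)] by simp
    qed (simp add: lr is_bundle_def)
  qed
  moreover have "rot m s ` T a \<inter> rot m s ` T b = {}" if "a < n" "b < n" "a \<noteq> b" for a b
  proof -
    have tail: "{len..<m} \<inter> X = {}" "X \<inter> {len..<m} = {}" if "X \<subseteq> {0..<len}" for X
      using that by auto
    have "T a \<inter> T b = {}"
      using that I_alloc(2) tail[OF I_sub] unfolding T_def by (auto split: if_splits)
    then show ?thesis using rot_image_Int[OF T_sub[OF that(1)] T_sub[OF that(2)]] by simp
  qed
  moreover have "(\<Union>a<n. rot m s ` T a) = {..<m}"
  proof -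
    have "(\<Union>a<n. T a) = {len..<m} \<union> (\<Union>a\<in>{..<n} - {a0}. I a)"
      using a0(1) unfolding T_def by (auto split: if_splits)
    also have "\<dots> = {..<m}" using I_alloc(3) m(2) by auto
    finally show ?thesis using rot_image_lessThan[OF m(1)] by (simp add: image_UN[symmetric])
  qed
  moreover have "c \<le> val (U a) (rot m s ` T a)" if "a < n" for a
    using a0(2) I_alloc(1) that val_rot_image[OF T_sub[OF that]] unfolding T_def by auto
  ultimately show ?thesis
    unfolding strong_alloc_def is_split_def T_def by presburger
qed

lemma strong_alloc_around_arc:
  assumes m: "0 < m" "s < m" "len < m" and "2 \<le> n" "0 < c"
    and nonneg: "\<And>a g. a < n \<Longrightarrow> g < m \<Longrightarrow> 0 \<le> U a g"
    and a0: "a0 < n" "c \<le> val (U a0) (rot m s ` {len..<m})"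
    and part: "{..<n} - {a0} = G \<union> B" "G \<inter> B = {}"
    and good: "\<And>g. g \<in> G \<Longrightarrow> outside_bundles m (n - 1) c (U g) (rot m s ` {len..<m})"
    and bad: "\<And>b. b \<in> B \<Longrightarrow> (\<forall>g<m. U b g < c) \<and>
       c * (2 * real (card B) + real (card G) - 1) \<le> val (U b) (rot m s ` {0..<len})"
  shows "\<exists>P. strong_alloc m n c U P"
proof -
  define w where "w = (\<lambda>a p. U a (rot m s p))"
  have card: "card ({..<n} - {a0}) = n - 1" using a0(1) by simp
  have "knife_invariant ({..<n} - {a0}) G B c w 0 len"
    unfolding knife_invariant_def
  proof (intro conjI ballI allI)
    show "finite ({..<n} - {a0})" by simp
    show "{..<n} - {a0} = G \<union> B" "G \<inter> B = {}" by (fact part)+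
    show "0 \<le> w a p" if "a \<in> {..<n} - {a0}" for a p
      using nonneg rot_lt[OF m(1)] that unfolding w_def by simp
    show "cuttable (w g) c (card ({..<n} - {a0})) 0 len" if "g \<in> G" for g
    proof -
      have "g \<in> {..<n} - {a0}" using that by (simp add: part(1))
      then show ?thesis
        unfolding card w_def
        by (intro cuttable_of_outside_bundles[OF m \<open>0 < c\<close> _ good[OF that]] nonneg) simp_all
    qed
    show "w b p < c" if "b \<in> B" for b p
      using bad[OF that] rot_lt[OF m(1)] unfolding w_def by auto
    show "c * (2 * real (card B) + real (card G) - 1) \<le> sum (w b) {0..<len}" if "b \<in> B" for b
      using bad[OF that] val_rot_interval[of len m "U b" s 0] m(3) unfolding w_def by auto
  qed
  moreover have "{..<n} - {a0} \<noteq> {}"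
  proof
    assume "{..<n} - {a0} = {}"
    then have "card ({..<n} - {a0}) = 0" by (simp only: card.empty)
    then show False using card \<open>2 \<le> n\<close> by simp
  qed
  ultimately have "\<exists>I. interval_alloc ({..<n} - {a0}) c w 0 len I"
    using moving_knife \<open>0 < c\<close> by blast
  then obtain I where "interval_alloc ({..<n} - {a0}) c (\<lambda>a p. U a (rot m s p)) 0 len I"
    unfolding w_def by blast
  from strong_alloc_of_interval_alloc[OF m(1) less_imp_le[OF m(3)] a0 this] show ?thesis by blast
qed

lemma is_bundle_all: "is_bundle m {..<m}"
proof (cases "m = 0")
  case False
  then show ?thesis
    using is_bundle_rot_image[of m m 0 0] rot_image_lessThan[of m 0] by (simp add: atLeast0LessThan)
qed (simp add: is_bundle_def)

lemma regular_split_ge_one: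
  assumes "0 < n" "n_regular m n u"
  shows "\<exists>P. is_split m n P \<and> (\<forall>i<n. 1 \<le> val u (P i))"
proof -
  define f where "f P = Min ((\<lambda>i. val u (P i)) ` {..<n})" for P :: "nat \<Rightarrow> nat set"
  define V where "V = {f P | P. is_split m n P}"
  have "V \<subseteq> f ` (Pi\<^sub>E {..<n} (\<lambda>_. Pow {..<m}))"
  proof
    fix v assume "v \<in> V"
    then obtain P where P: "is_split m n P" "v = f P" unfolding V_def by blast
    have "restrict P {..<n} \<in> Pi\<^sub>E {..<n} (\<lambda>_. Pow {..<m})"
      using P(1) unfolding is_split_def by auto
    moreover have "f (restrict P {..<n}) = f P" unfolding f_def by simp
    ultimately show "v \<in> f ` (Pi\<^sub>E {..<n} (\<lambda>_. Pow {..<m}))" using P(2) by (metis image_eqI)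
  qed
  then have "finite V" by (rule finite_subset) (simp add: finite_PiE)
  moreover have "is_split m n (\<lambda>i. if i = 0 then {..<m} else {})"
    using assms(1) is_bundle_all unfolding is_split_def by (auto simp: is_bundle_def)
  then have "V \<noteq> {}" unfolding V_def by blast
  ultimately have "Max V \<in> V" by simp
  moreover have "Max V = 1" using assms(2) unfolding n_regular_def mms_def V_def f_def by simp
  ultimately obtain P where P: "is_split m n P" "f P = 1" unfolding V_def by auto
  have "1 \<le> val u (P i)" if "i < n" for i
    using P(2) Min_le[of "(\<lambda>i. val u (P i)) ` {..<n}"] that unfolding f_def by auto
  with P(1) show ?thesis by blast
qed

lemma regular_total: "0 < n \<Longrightarrow> n_regular m n u \<Longrightarrow> val u {..<m} = real n"
  unfolding n_regular_def by simp

lemma ratio_budget: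
  fixes t n g :: nat
  assumes "2 \<le> t" "2 * n \<le> t * g"
  shows "real t / (2 * real t - 2) * (2 * real n - real g) \<le> real n"
proof -
  have "real t * (2 * real n - real g) \<le> real n * (2 * real t - 2)"
    using of_nat_mono[OF assms(2)] by (simp add: algebra_simps)
  then show ?thesis using assms(1) by (simp add: divide_le_eq mult.commute)
qed

lemma two_largest_types_card:
  fixes t :: nat and Ns :: "nat \<Rightarrow> nat set"
  assumes t2: "t \<ge> 2"
    and disj: "\<forall>i\<in>{1..t}. \<forall>j\<in>{1..t}. i \<noteq> j \<longrightarrow> Ns i \<inter> Ns j = {}"
    and cover: "(\<Union>i\<in>{1..t}. Ns i) = {..<n}"
    and sizes: "\<forall>i\<in>{1..<t}. card (Ns i) \<ge> card (Ns (Suc i))"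
  shows "2 * n \<le> t * (card (Ns 1) + card (Ns 2))"
proof -
  have fin: "finite (Ns i)" if "i \<in> {1..t}" for i using cover that
    by (metis UN_upper finite_lessThan finite_subset)
  have n: "n = (\<Sum>i\<in>{1..t}. card (Ns i))"
  proof -
    have "card (\<Union>i\<in>{1..t}. Ns i) = (\<Sum>i\<in>{1..t}. card (Ns i))"
      by (rule card_UN_disjoint) (use fin disj in auto)
    then show ?thesis using cover by simp
  qed
  have le2: "card (Ns i) \<le> card (Ns 2)" if "2 \<le> i" "i \<le> t" for i
    using that
  proof (induction i rule: dec_induct)
    case base then show ?case by simp
  next
    case (step i)
    then have "card (Ns (Suc i)) \<le> card (Ns i)" using sizes by auto
    then show ?case using step by simp
  qed
  have "(1::nat) \<in> {1..<t}" using t2 by auto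
  then have c12: "card (Ns 2) \<le> card (Ns 1)" using sizes by (metis numeral_2_eq_2 One_nat_def)
  have "{1..t} = insert 1 {2..t}" using t2 by auto
  then have "(\<Sum>i\<in>{1..t}. card (Ns i)) = card (Ns 1) + (\<Sum>i\<in>{2..t}. card (Ns i))" by simp
  also have "(\<Sum>i\<in>{2..t}. card (Ns i)) \<le> (\<Sum>i\<in>{2..t}. card (Ns 2))"
    by (rule sum_mono) (use le2 in auto)
  also have "\<dots> = (t - 1) * card (Ns 2)" by simp
  finally have nle: "n \<le> card (Ns 1) + (t - 1) * card (Ns 2)" using n by simp
  obtain t' where t': "t = t' + 2" using t2 by (metis add.commute le_Suc_ex)
  have "t' * card (Ns 2) \<le> t' * card (Ns 1)" using c12 by simp
  then have "2 * (card (Ns 1) + (t - 1) * card (Ns 2)) \<le> t * (card (Ns 1) + card (Ns 2))"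
    unfolding t' by (simp add: algebra_simps)
  moreover have "2 * n \<le> 2 * (card (Ns 1) + (t - 1) * card (Ns 2))" using nle by simp
  ultimately show ?thesis by (rule le_trans[rotated])
qed

lemma types_budget:
  fixes t :: nat and Ns :: "nat \<Rightarrow> nat set"
  assumes t2: "t \<ge> 2"
    and disj: "\<forall>i\<in>{1..t}. \<forall>j\<in>{1..t}. i \<noteq> j \<longrightarrow> Ns i \<inter> Ns j = {}"
    and cover: "(\<Union>i\<in>{1..t}. Ns i) = {..<n}"
    and sizes: "\<forall>i\<in>{1..<t}. card (Ns i) \<ge> card (Ns (Suc i))"
  shows "real t / (2 * real t - 2) * (2 * real n - real (card (Ns 1 \<union> Ns 2))) \<le> real n"
proof -
  have "Ns 1 \<subseteq> {..<n}" "Ns 2 \<subseteq> {..<n}" "Ns 1 \<inter> Ns 2 = {}" using cover disj t2 by auto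
  then have "card (Ns 1 \<union> Ns 2) = card (Ns 1) + card (Ns 2)"
    using finite_subset[OF _ finite_lessThan] by (intro card_Un_disjoint) auto
  then show ?thesis using ratio_budget[OF t2 two_largest_types_card[OF t2 disj cover sizes]] by simp
qed

lemma strong_alloc_of_heavy_good:
  assumes "2 \<le> n" "0 < c" "c \<le> 1"
    and nonneg: "\<And>a g. a < n \<Longrightarrow> g < m \<Longrightarrow> 0 \<le> U a g"
    and regular: "\<And>a. a < n \<Longrightarrow> n_regular m n (U a)"
    and heavy: "a0 < n" "g0 < m" "c \<le> U a0 g0"
  shows "\<exists>P. strong_alloc m n c U P"
proof -
  have m: "0 < m" "(g0 + 1) mod m < m" "m - 1 < m" using heavy(2) by auto
  have D: "rot m ((g0 + 1) mod m) ` {m - 1..<m} = {g0}"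
    using rot_interval_to_end[of 1 m g0 0] heavy(2) by (simp add: rot_def)
  show ?thesis
  proof (rule strong_alloc_around_arc[OF m assms(1,2) nonneg heavy(1), where G = "{..<n} - {a0}" and B = "{}"])
    show "c \<le> val (U a0) (rot m ((g0 + 1) mod m) ` {m - 1..<m})"
      unfolding D val_def using heavy(3) by simp
    show "outside_bundles m (n - 1) c (U g) (rot m ((g0 + 1) mod m) ` {m - 1..<m})"
      if g: "g \<in> {..<n} - {a0}" for g
    proof -
      have "0 < n" "n_regular m n (U g)" using assms(1) regular g by auto
      then obtain P where P: "is_split m n P" "\<And>i. i < n \<Longrightarrow> 1 \<le> val (U g) (P i)"
        using regular_split_ge_one by blast
      have "g0 \<in> (\<Union>i<n. P i)" using P(1) heavy(2) unfolding is_split_def by simp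
      then obtain i0 where "i0 < n" "{g0} \<subseteq> P i0" by blast
      moreover have "c \<le> val (U g) (P i)" if "i < n" for i
        using P(2)[OF that] \<open>c \<le> 1\<close> by linarith
      ultimately show ?thesis
        unfolding D by (rule outside_bundles_of_split[OF P(1)])
    qed
  qed simp_all
qed

text \<open>If \<open>P1 i \<union> P2 j\<close> is the whole cycle, any other bundle of \<open>P2\<close> lies inside \<open>P1 i\<close>.
  Otherwise cutting the cycle at a good outside both makes them, and hence their intersection,
  intervals of a path.\<close>

lemma arc_in_bundle_intersection:
  assumes m: "0 < m" and "2 \<le> n" "0 < c"
    and split: "is_split m n P1" "is_split m n P2"
    and AB: "i < n" "j < n" "a < n" "c \<le> val (U a) (P1 i \<inter> P2 j)"
    and b: "b < n" "strong_for n c (U b) P2"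
  shows "\<exists>s x y i' j' a'. s < m \<and> y \<le> m \<and> i' < n \<and> j' < n \<and> a' < n \<and>
     rot m s ` {x..<y} \<subseteq> P1 i' \<inter> P2 j' \<and> c \<le> val (U a') (rot m s ` {x..<y})"
proof -
  have P: "\<And>k. k < n \<Longrightarrow> is_bundle m (P1 k) \<and> is_bundle m (P2 k)"
    "\<And>k k'. k < n \<Longrightarrow> k' < n \<Longrightarrow> k \<noteq> k' \<Longrightarrow> P2 k \<inter> P2 k' = {}"
    "(\<Union>k<n. P1 k) = {..<m}" "(\<Union>k<n. P2 k) = {..<m}"
    using split unfolding is_split_def by simp_all
  have sub: "P1 i \<subseteq> {..<m}" "P2 j \<subseteq> {..<m}" using P(3,4) AB(1,2) by auto
  have ne: "P1 i \<inter> P2 j \<noteq> {}" using AB(4) \<open>0 < c\<close> by (auto simp: val_def)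
  show ?thesis
  proof (cases "P1 i \<union> P2 j = {..<m}")
    case True
    define j' where "j' = (if j = 0 then 1 else 0 :: nat)"
    have j': "j' < n" "j' \<noteq> j" unfolding j'_def using \<open>2 \<le> n\<close> by auto
    have "P2 j' \<subseteq> {..<m}" "P2 j' \<inter> P2 j = {}" using P(2,4) j' AB(2) by auto
    then have inside: "P2 j' \<subseteq> P1 i \<inter> P2 j'" using True by blast
    have vb: "c \<le> val (U b) (P2 j')" using b j'(1) unfolding strong_for_def by blast
    then have "P2 j' \<noteq> {}" using \<open>0 < c\<close> by (auto simp: val_def)
    then have "\<exists>s k. s < m \<and> k \<le> m \<and> P2 j' = rot m s ` {0..<k}"
      using P(1)[OF j'(1)] unfolding is_bundle_def rot_image_interval by simp
    then obtain s k where sk: "s < m" "k \<le> m" "P2 j' = rot m s ` {0..<k}" by blast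
    then have "rot m s ` {0..<k} \<subseteq> P1 i \<inter> P2 j'" "c \<le> val (U b) (rot m s ` {0..<k})"
      using inside vb by simp_all
    then show ?thesis using AB(1) j'(1) b(1) sk(1,2) by blast
  next
    case False
    then obtain q where q: "q < m" "q \<notin> P1 i" "q \<notin> P2 j" using sub by blast
    define s where "s = (q + 1) mod m"
    have s: "s < m" "m - 1 < m" unfolding s_def using m by auto
    have tail: "rot m s ` {m - 1..<m} = {q}"
      using rot_interval_to_end[of 1 m q 0] q(1) unfolding s_def by (simp add: rot_def)
    have "is_bundle m (P1 i)" "P1 i \<noteq> {}" "P1 i \<inter> rot m s ` {m - 1..<m} = {}"
      "is_bundle m (P2 j)" "P2 j \<noteq> {}" "P2 j \<inter> rot m s ` {m - 1..<m} = {}"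
      using P(1) AB(1,2) ne q(2,3) unfolding tail by auto
    then obtain a1 a2 b1 b2 where "a2 \<le> m - 1" "P1 i = rot m s ` {a1..<a2}"
      and "b2 \<le> m - 1" "P2 j = rot m s ` {b1..<b2}"
      by (metis bundle_off_tail_eq_interval[OF m s])
    moreover have "{a1..<a2} \<subseteq> {..<m}" "{b1..<b2} \<subseteq> {..<m}"
      using \<open>a2 \<le> m - 1\<close> \<open>b2 \<le> m - 1\<close> by auto
    ultimately have "P1 i \<inter> P2 j = rot m s ` ({a1..<a2} \<inter> {b1..<b2})"
      using rot_image_Int by simp
    also have "{a1..<a2} \<inter> {b1..<b2} = {max a1 b1..<min a2 b2}" by auto
    finally have "P1 i \<inter> P2 j = rot m s ` {max a1 b1..<min a2 b2}" .
    then have "rot m s ` {max a1 b1..<min a2 b2} \<subseteq> P1 i \<inter> P2 j"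
      "c \<le> val (U a) (rot m s ` {max a1 b1..<min a2 b2})" using AB(4) by simp_all
    moreover have "min a2 b2 \<le> m" using \<open>a2 \<le> m - 1\<close> by linarith
    ultimately show ?thesis using AB(1-3) s(1) by blast
  qed
qed

text \<open>On a shortest valuable interval, dropping the last good leaves every agent below \<open>c\<close>.\<close>

lemma shortest_valuable_interval:
  fixes w :: "nat \<Rightarrow> nat \<Rightarrow> real"
  assumes "e \<in> A" "c \<le> sum (w e) {x..<y}" "0 < c" "\<And>a p. a \<in> A \<Longrightarrow> w a p < c"
  shows "\<exists>z k a0. x \<le> z \<and> z + k \<le> y \<and> 0 < k \<and> a0 \<in> A \<and> c \<le> sum (w a0) {z..<z + k} \<and>
    (\<forall>a\<in>A. sum (w a) {z..<z + k} < 2 * c)"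
proof -
  define fits where "fits k \<longleftrightarrow> (\<exists>z. x \<le> z \<and> z + k \<le> y \<and> (\<exists>a\<in>A. c \<le> sum (w a) {z..<z + k}))"
    for k
  have "x \<le> y" using assms(2,3) by (cases "x \<le> y") auto
  then have "fits (y - x)" unfolding fits_def using assms(1,2) by (intro exI[of _ x]) auto
  define k where "k = (LEAST k. fits k)"
  have "fits k" unfolding k_def by (rule LeastI) fact
  then obtain z a0 where z: "x \<le> z" "z + k \<le> y" "a0 \<in> A" "c \<le> sum (w a0) {z..<z + k}"
    unfolding fits_def by blast
  have "0 < k" using z(4) assms(3) by (cases k) auto
  have "sum (w a) {z..<z + k} < 2 * c" if "a \<in> A" for a
  proof -
    have "\<not> fits (k - 1)" using not_less_Least[of "k - 1" fits] \<open>0 < k\<close> unfolding k_def by auto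
    moreover have "z + (k - 1) \<le> y" using z(2) by simp
    ultimately have "sum (w a) {z..<z + (k - 1)} < c" using z(1) that unfolding fits_def by (meson not_le)
    moreover have "sum (w a) {z..<z + k} = sum (w a) {z..<z + (k - 1)} + w a (z + (k - 1))"
      using \<open>0 < k\<close> by (cases k) auto
    ultimately show ?thesis using assms(4)[OF that, of "z + (k - 1)"] by linarith
  qed
  then show ?thesis using z \<open>0 < k\<close> by blast
qed

lemma reserved_arc:
  assumes m: "0 < m" and "2 \<le> n" "0 < c"
    and light: "\<And>a g. a < n \<Longrightarrow> g < m \<Longrightarrow> U a g < c"
    and split: "is_split m n P1" "is_split m n P2"
    and AB: "i < n" "j < n" "a < n" "c \<le> val (U a) (P1 i \<inter> P2 j)"
    and b: "b < n" "strong_for n c (U b) P2"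
  obtains s k i' j' a0 where "s < m" "0 < k" "k \<le> m" "i' < n" "j' < n" "a0 < n"
    "rot m s ` {m - k..<m} \<subseteq> P1 i' \<inter> P2 j'" "c \<le> val (U a0) (rot m s ` {m - k..<m})"
    "\<forall>a<n. val (U a) (rot m s ` {m - k..<m}) < 2 * c"
proof -
  obtain s x y i' j' a' where arc: "s < m" "y \<le> m" "i' < n" "j' < n" "a' < n"
    "rot m s ` {x..<y} \<subseteq> P1 i' \<inter> P2 j'" "c \<le> val (U a') (rot m s ` {x..<y})"
    using arc_in_bundle_intersection[OF assms(1-3) split AB b] by (elim exE conjE) (rule that)
  have "\<exists>z k a0. x \<le> z \<and> z + k \<le> y \<and> 0 < k \<and> a0 \<in> {..<n} \<and>
      c \<le> (\<Sum>p = z..<z + k. U a0 (rot m s p)) \<and> (\<forall>a\<in>{..<n}. (\<Sum>p = z..<z + k. U a (rot m s p)) < 2 * c)"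
    by (rule shortest_valuable_interval[where w = "\<lambda>a p. U a (rot m s p)" and e = a'])
      (use arc val_rot_interval light rot_lt[OF m] \<open>0 < c\<close> in auto)
  then obtain z k a0 where zk: "x \<le> z" "z + k \<le> y" "0 < k" "a0 < n"
    "c \<le> (\<Sum>p = z..<z + k. U a0 (rot m s p))" "\<forall>a<n. (\<Sum>p = z..<z + k. U a (rot m s p)) < 2 * c"
    by auto
  define s' where "s' = (s + (z + k)) mod m"
  have D: "rot m s' ` {m - k..<m} = rot m s ` {z..<z + k}"
    unfolding s'_def using rot_interval_to_end zk(2) arc(2) by simp
  have "rot m s' ` {m - k..<m} \<subseteq> P1 i' \<inter> P2 j'" unfolding D using arc(6) zk(1,2) by auto
  moreover have "c \<le> val (U a0) (rot m s' ` {m - k..<m})"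
    "\<forall>a<n. val (U a) (rot m s' ` {m - k..<m}) < 2 * c"
    unfolding D using zk(2,5,6) arc(2) val_rot_interval[of "z + k" m] by auto
  moreover have "s' < m" "k \<le> m" unfolding s'_def using m zk(2) arc(2) by auto
  ultimately show thesis using that[of s' k i' j' a0] zk(3,4) arc(3,4) by simp
qed

lemma bad_budget:
  assumes "G \<subseteq> {..<n}" "a0 < n" "0 \<le> c" "c * (2 * real n - real (card G)) \<le> real n"
  shows "c * (2 * real (card ({..<n} - G - {a0})) + real (card (G - {a0})) - 1) \<le> real n - 2 * c"
proof -
  have fin: "finite G" using assms(1) finite_subset by blast
  have "card (G - {a0}) + card ({..<n} - G - {a0}) = card (G - {a0} \<union> ({..<n} - G - {a0}))"
    by (rule card_Un_disjoint[symmetric]) (use fin in auto)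
  also have "G - {a0} \<union> ({..<n} - G - {a0}) = {..<n} - {a0}" using assms(1) by auto
  finally
  have part: "real (card (G - {a0})) + real (card ({..<n} - G - {a0})) = real n - 1"
    using assms(2) by (simp add: of_nat_diff flip: of_nat_add)
  have "card ({..<n} - G - {a0}) \<le> card ({..<n} - G)" by (rule card_mono) auto
  also have "\<dots> = n - card G" using assms(1) fin by (simp add: card_Diff_subset)
  finally have "real (card ({..<n} - G - {a0})) \<le> real n - real (card G)"
    using card_mono[OF _ assms(1)] by (simp add: of_nat_diff)
  then have "c * (2 * real (card ({..<n} - G - {a0})) + real (card (G - {a0})) - 1)
      \<le> c * (2 * real n - real (card G) - 2)"
    using part assms(3) by (intro mult_left_mono) auto
  then show ?thesis using assms(4) by (simp add: algebra_simps)
qed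

lemma strong_alloc_of_light_goods:
  assumes "2 \<le> n" "0 < c"
    and nonneg: "\<And>a g. a < n \<Longrightarrow> g < m \<Longrightarrow> 0 \<le> U a g"
    and total: "\<And>a. a < n \<Longrightarrow> val (U a) {..<m} = real n"
    and light: "\<And>a g. a < n \<Longrightarrow> g < m \<Longrightarrow> U a g < c"
    and split: "is_split m n P1" "is_split m n P2"
    and G: "G \<subseteq> {..<n}" "\<And>g. g \<in> G \<Longrightarrow> strong_for n c (U g) P1 \<or> strong_for n c (U g) P2"
    and budget: "c * (2 * real n - real (card G)) \<le> real n"
    and AB: "i < n" "j < n" "a < n" "c \<le> val (U a) (P1 i \<inter> P2 j)"
    and b: "b < n" "strong_for n c (U b) P2"
  shows "\<exists>P. strong_alloc m n c U P"
proof -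
  have "P1 i \<inter> P2 j \<noteq> {}" using AB(4) \<open>0 < c\<close> by (auto simp: val_def)
  then have m: "0 < m" using split(1) AB(1) unfolding is_split_def by auto
  obtain s k i' j' a0 where arc: "s < m" "0 < k" "k \<le> m" "i' < n" "j' < n" "a0 < n"
    "rot m s ` {m - k..<m} \<subseteq> P1 i' \<inter> P2 j'" "c \<le> val (U a0) (rot m s ` {m - k..<m})"
    "\<forall>a<n. val (U a) (rot m s ` {m - k..<m}) < 2 * c"
    using light by (rule reserved_arc[OF m assms(1,2) _ split AB b])
  have len: "m - k < m" using arc(2,3) by simp
  show ?thesis
  proof (rule strong_alloc_around_arc[where U = U, OF m arc(1) len assms(1,2) nonneg arc(6,8)])
    show "{..<n} - {a0} = (G - {a0}) \<union> ({..<n} - G - {a0})" "(G - {a0}) \<inter> ({..<n} - G - {a0}) = {}"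
      using G(1) by auto
    show "outside_bundles m (n - 1) c (U g) (rot m s ` {m - k..<m})" if "g \<in> G - {a0}" for g
      using G(2)[of g] that outside_bundles_of_split[OF split(1) arc(4)] outside_bundles_of_split[OF split(2) arc(5)]
        arc(7) unfolding strong_for_def by blast
    show "(\<forall>g<m. U b g < c) \<and> c * (2 * real (card ({..<n} - G - {a0})) + real (card (G - {a0})) - 1)
        \<le> val (U b) (rot m s ` {0..<m - k})" if "b \<in> {..<n} - G - {a0}" for b
    proof -
      have "b < n" using that by simp
      have "val (U b) (rot m s ` {0..<m - k}) = real n - val (U b) (rot m s ` {m - k..<m})"
        using val_rot_split[OF m, of "m - k" "U b" s] total[OF \<open>b < n\<close>] by simp
      then have "real n - 2 * c \<le> val (U b) (rot m s ` {0..<m - k})"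
        using arc(9) \<open>b < n\<close> by auto
      then show ?thesis
        using bad_budget[OF G(1) arc(6) _ budget] \<open>0 < c\<close> light \<open>b < n\<close> by force
    qed
  qed
qed

theorem lemma4p6:
  fixes m n t :: nat and U :: "nat \<Rightarrow> nat \<Rightarrow> real"
    and Ns :: "nat \<Rightarrow> nat set" and P1 P2 :: "nat \<Rightarrow> nat set"
  assumes nonneg: "\<forall>a<n. \<forall>g<m. U a g \<ge> 0"
    and regular: "\<forall>a<n. n_regular m n (U a)"
    and t2: "t \<ge> 2"
    and disj: "\<forall>i\<in>{1..t}. \<forall>j\<in>{1..t}. i \<noteq> j \<longrightarrow> Ns i \<inter> Ns j = {}"
    and cover: "(\<Union>i\<in>{1..t}. Ns i) = {..<n}"
    and sizes: "\<forall>i\<in>{1..<t}. card (Ns i) \<ge> card (Ns (Suc i))"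
    and types: "\<forall>i\<in>{1..t}. \<forall>a\<in>Ns i. \<forall>b\<in>Ns i. \<forall>g<m. U a g = U b g"
    and ne1: "Ns 1 \<noteq> {}" and ne2: "Ns 2 \<noteq> {}"
    and split1: "is_split m n P1" and split2: "is_split m n P2"
    and strong1: "\<forall>a\<in>Ns 1. strong_for n (real t / (2 * real t - 2)) (U a) P1"
    and strong2: "\<forall>a\<in>Ns 2. strong_for n (real t / (2 * real t - 2)) (U a) P2"
    and AB: "\<exists>i<n. \<exists>j<n. \<exists>a<n. val (U a) (P1 i \<inter> P2 j) \<ge> real t / (2 * real t - 2)"
  shows "\<exists>P. strong_alloc m n (real t / (2 * real t - 2)) U P"
proof -
  define c where "c = real t / (2 * real t - 2)"
  have c: "0 < c" "c \<le> 1" unfolding c_def using t2 by (simp_all add: field_simps)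
  have N: "Ns 1 \<union> Ns 2 \<subseteq> {..<n}" "Ns 1 \<inter> Ns 2 = {}" using cover disj t2 by auto
  obtain x1 x2 where x: "x1 \<in> Ns 1" "x2 \<in> Ns 2" using ne1 ne2 by blast
  then have "x1 < n" "x2 < n" "x1 \<noteq> x2" using N by auto
  then have n2: "2 \<le> n" by linarith
  obtain i j a where AB: "i < n" "j < n" "a < n" "c \<le> val (U a) (P1 i \<inter> P2 j)"
    using AB unfolding c_def by blast
  note nonneg' = nonneg[rule_format] and regular' = regular[rule_format]
  have "\<exists>P. strong_alloc m n c U P"
  proof (cases "\<exists>a<n. \<exists>g<m. c \<le> U a g")
    case True
    then show ?thesis using strong_alloc_of_heavy_good[where U = U, OF n2 c nonneg' regular'] by blast
  next
    case False
    show ?thesis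
    proof (rule strong_alloc_of_light_goods[where U = U and G = "Ns 1 \<union> Ns 2" and i = i and j = j
          and a = a and b = x2, OF n2 c(1) nonneg' _ _ split1 split2 _ _ _ AB])
      show "\<And>a. a < n \<Longrightarrow> val (U a) {..<m} = real n" using regular_total regular' n2 by simp
      show "\<And>a g. a < n \<Longrightarrow> g < m \<Longrightarrow> U a g < c" using False by (simp add: not_le)
      show "Ns 1 \<union> Ns 2 \<subseteq> {..<n}" by (fact N(1))
      show "\<And>g. g \<in> Ns 1 \<union> Ns 2 \<Longrightarrow> strong_for n c (U g) P1 \<or> strong_for n c (U g) P2"
        using strong1 strong2 unfolding c_def by blast
      show "c * (2 * real n - real (card (Ns 1 \<union> Ns 2))) \<le> real n"
        unfolding c_def by (rule types_budget[OF t2 disj cover sizes])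
      show "x2 < n" "strong_for n c (U x2) P2" using x(2) \<open>x2 < n\<close> strong2 unfolding c_def by auto
    qed
  qed
  then show ?thesis unfolding c_def .
qed

end
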